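(* For any odd prime $p$ and any positive integer $r$, $$p^rH_{p^r-1}(1)\equiv pH_{p-1}(1),\qquad p^{2r}H_{p^r-1}(1,1)\equiv p^2H_{p-1}(1,1),\qquad p^{3r}H_{p^r-1}(1,1,1)\equiv p^3H_{p-1}(1,1,1)\pmod{p^4}.$$
   Context: For positive integers $s_1,\dots,s_m$ and an integer $n\ge0$, $H_n(s_1,\dots,s_m)=\sum_{1\le k_1<\cdots<k_m\le n}\frac{1}{k_1^{s_1}\cdots k_m^{s_m}}$. A congruence $a\equiv b\pmod{p^m}$ between rational numbers means that $(a-b)/p^m$ is a rational number whose denominator is not divisible by $p$. *)

theory Defs
  imports Complex_Main "HOL-Computational_Algebra.Primes"
begin

definition mhs :: "nat \<Rightarrow> nat list \<Rightarrow> rat" where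
  "mhs n s = (\<Sum>ks \<in> {ks. length ks = length s \<and> sorted_wrt (<) ks \<and> set ks \<subseteq> {1..n}}.
                 (\<Prod>i<length s. 1 / (of_nat (ks ! i) ^ (s ! i))))"

definition rat_cong :: "rat \<Rightarrow> rat \<Rightarrow> nat \<Rightarrow> nat \<Rightarrow> bool" where
  "rat_cong a b p m = (\<not> (int p) dvd snd (quotient_of ((a - b) / of_nat (p ^ m))))"

end

theory Submission
  imports Defs "HOL-Computational_Algebra.Polynomial"
begin

text \<open>Write \<open>N = p^r\<close> and \<open>x k = N / k\<close>. Then \<open>N^d H_{N-1}(1,...,1)\<close> is the \<open>d\<close>-th
  elementary symmetric function of the \<open>x k\<close>, \<open>0 < k < N\<close>. Split the indices into the
  multiples \<open>k = p^(r-1) m\<close>, where \<open>x k = p / m\<close> are exactly the variables of the case \<open>r = 1\<close>,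
  and the rest, where \<open>p^2\<close> divides \<open>x k\<close> \<open>p\<close>-adically. Expanding \<open>e_d\<close> of the union, every
  term other than \<open>e_d\<close>(multiples) contains a factor \<open>e_j\<close>(rest) with \<open>j \<ge> 1\<close>: this is
  divisible by \<open>p^(2j)\<close>, and for \<open>j = 1\<close> still by \<open>p^4\<close>, since pairing \<open>k = p^v m\<close> with
  \<open>N - k\<close> gives \<open>x k + x (N - k) = p^(2t) / (m (p^t - m))\<close> with \<open>t = r - v \<ge> 2\<close>.\<close>

definition esym :: "'a set \<Rightarrow> ('a \<Rightarrow> 'b::comm_semiring_1) \<Rightarrow> nat \<Rightarrow> 'b" where
  "esym X y d = (\<Sum>T | T \<subseteq> X \<and> card T = d. \<Prod>k\<in>T. y k)"

lemma prod_monom_1: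
  fixes y :: "'a \<Rightarrow> 'b::comm_semiring_1"
  shows "finite T \<Longrightarrow> (\<Prod>k\<in>T. monom (y k) 1) = monom (\<Prod>k\<in>T. y k) (card T)"
  by (induction T rule: finite_induct) (auto simp: mult_monom)

lemma coeff_prod_linear_factors:
  fixes y :: "'a \<Rightarrow> 'b::comm_semiring_1"
  assumes "finite X"
  shows "coeff (\<Prod>k\<in>X. [:1, y k:]) d = esym X y d"
proof -
  have linear: "[:1, y k:] = monom (y k) 1 + 1" for k
    by (rule poly_eqI) (auto simp: coeff_monom coeff_pCons split: nat.split)
  have "(\<Prod>k\<in>X. [:1, y k:]) = (\<Sum>T\<in>Pow X. (\<Prod>k\<in>T. monom (y k) 1) * (\<Prod>k\<in>X-T. 1))"
    unfolding linear by (rule prod_add[OF assms])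
  also have "\<dots> = (\<Sum>T\<in>Pow X. monom (\<Prod>k\<in>T. y k) (card T))"
  proof (intro sum.cong refl)
    fix T assume "T \<in> Pow X"
    then have "finite T" using assms finite_subset by auto
    then show "(\<Prod>k\<in>T. monom (y k) 1) * (\<Prod>k\<in>X-T. 1) = monom (\<Prod>k\<in>T. y k) (card T)"
      using prod_monom_1[of T y] by simp
  qed
  finally have "coeff (\<Prod>k\<in>X. [:1, y k:]) d = (\<Sum>T\<in>Pow X. if card T = d then \<Prod>k\<in>T. y k else 0)"
    by (simp add: coeff_sum coeff_monom eq_commute)
  also have "\<dots> = (\<Sum>T\<in>{T\<in>Pow X. card T = d}. \<Prod>k\<in>T. y k)"
    using assms by (subst sum.inter_filter) auto
  finally show ?thesis
    by (simp add: esym_def Pow_def Collect_conj_eq)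
qed

lemma esym_union:
  assumes "finite A" "finite B" "A \<inter> B = {}"
  shows "esym (A \<union> B) y d = (\<Sum>j\<le>d. esym A y j * esym B y (d - j))"
  using assms
  by (simp add: coeff_prod_linear_factors[symmetric] prod.union_disjoint coeff_mult)

lemma esym_reindex:
  assumes "finite X" "inj_on h X"
  shows "esym (h ` X) y d = esym X (y \<circ> h) d"
  using assms
  by (simp add: coeff_prod_linear_factors[symmetric] prod.reindex)

lemma esym_0: "finite X \<Longrightarrow> esym X y 0 = 1"
proof -
  assume "finite X"
  then have "{T. T \<subseteq> X \<and> card T = 0} = {{}}"
    by (auto dest: finite_subset)
  then show ?thesis
    by (simp add: esym_def)
qed

lemma esym_1: "esym X y 1 = sum y X"
proof -
  have "{T. T \<subseteq> X \<and> card T = 1} = (\<lambda>k. {k}) ` X"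
    by (auto simp: card_1_singleton_iff)
  then show ?thesis
    by (simp add: esym_def sum.reindex)
qed

lemma mhs_replicate_1_eq_esym:
  fixes c :: rat
  shows "c ^ d * mhs n (replicate d 1) = esym {1..n} (\<lambda>k. c / of_nat k) d"
proof -
  define L where "L = {ks. length ks = d \<and> sorted_wrt (<) ks \<and> set ks \<subseteq> {1..n}}"
  define TT where "TT = {T. T \<subseteq> {1..n} \<and> card T = d}"
  have bij: "bij_betw set L TT"
  proof (rule bij_betwI')
    fix xs ys assume "xs \<in> L" "ys \<in> L"
    then show "(set xs = set ys) = (xs = ys)"
      unfolding L_def using strict_sorted_equal by blast
  next
    fix xs assume "xs \<in> L"
    then show "set xs \<in> TT"
      unfolding L_def TT_def by (auto simp: strict_sorted_iff distinct_card)
  next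
    fix T assume T: "T \<in> TT"
    then have "finite T"
      unfolding TT_def using finite_subset by auto
    with T show "\<exists>xs\<in>L. T = set xs"
      unfolding L_def TT_def by (intro bexI[of _ "sorted_list_of_set T"]) auto
  qed
  have prod_set: "(\<Prod>i<d. 1 / of_nat (ks ! i)) = (\<Prod>k\<in>set ks. 1 / (of_nat k :: rat))"
    if "ks \<in> L" for ks
  proof -
    have "distinct ks" "length ks = d"
      using that unfolding L_def by (auto simp: strict_sorted_iff)
    then show ?thesis
      by (simp add: prod.distinct_set_conv_list prod.list_conv_set_nth atLeast0LessThan)
  qed
  have "mhs n (replicate d 1) = (\<Sum>ks\<in>L. \<Prod>i<d. 1 / of_nat (ks ! i))"
    unfolding mhs_def L_def by simp
  also have "\<dots> = (\<Sum>T\<in>TT. \<Prod>k\<in>T. 1 / (of_nat k :: rat))"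
    using sum.reindex_bij_betw[OF bij] prod_set by (metis (no_types, lifting) sum.cong)
  finally have "c ^ d * mhs n (replicate d 1) = (\<Sum>T\<in>TT. c ^ card T * (\<Prod>k\<in>T. 1 / of_nat k))"
    by (simp add: sum_distrib_left TT_def)
  then show ?thesis
    by (simp add: esym_def TT_def prod.distrib divide_inverse)
qed

definition ppow_dvd :: "nat \<Rightarrow> nat \<Rightarrow> rat \<Rightarrow> bool" where
  "ppow_dvd p m q \<longleftrightarrow> (\<exists>a b::int. \<not> int p dvd b \<and> q = of_int a * of_nat p ^ m / of_int b)"

lemma rat_cong_if_ppow_dvd_diff:
  assumes "prime p" "ppow_dvd p m (a - b)"
  shows "rat_cong a b p m"
proof -
  obtain x y :: int where xy: "\<not> int p dvd y" "a - b = of_int x * of_nat p ^ m / of_int y"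
    using assms(2) unfolding ppow_dvd_def by blast
  obtain c e where ce: "quotient_of ((a - b) / of_nat (p ^ m)) = (c, e)"
    by (cases "quotient_of ((a - b) / of_nat (p ^ m))")
  have "(of_nat p ^ m :: rat) \<noteq> 0"
    using assms(1) by (auto dest: prime_gt_0_nat)
  with xy(2) have "of_int c / of_int e = (of_int x / of_int y :: rat)"
    using quotient_of_div[OF ce] by simp
  moreover have "y \<noteq> 0" "e \<noteq> 0"
    using xy(1) quotient_of_denom_pos[OF ce] by auto
  ultimately have "of_int (c * y) = (of_int (x * e) :: rat)"
    by (simp add: field_simps)
  then have "c * y = x * e"
    by (simp only: of_int_eq_iff)
  then have "e dvd c * y"
    by (metis dvd_triv_right)
  moreover have "coprime e c"
    using quotient_of_coprime[OF ce] by (simp add: coprime_commute)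
  ultimately have "e dvd y"
    using coprime_dvd_mult_right_iff by blast
  with xy(1) have "\<not> int p dvd e"
    using dvd_trans by blast
  then show ?thesis
    unfolding rat_cong_def ce by simp
qed

lemma ppow_dvd_frac: "\<not> int p dvd b \<Longrightarrow> ppow_dvd p m (of_nat p ^ m / of_int b)"
  unfolding ppow_dvd_def by (intro exI[of _ 1] exI[of _ b]) simp

lemma ppow_dvd_0: "prime p \<Longrightarrow> ppow_dvd p m 0"
  unfolding ppow_dvd_def by (intro exI[of _ 0] exI[of _ 1]) (auto simp: prime_gt_1_nat)

lemma ppow_dvd_1: "prime p \<Longrightarrow> ppow_dvd p 0 1"
  unfolding ppow_dvd_def by (intro exI[of _ 1] exI[of _ 1]) (auto simp: prime_gt_1_nat)

lemma ppow_dvd_mono: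
  assumes "ppow_dvd p m q" "n \<le> m"
  shows "ppow_dvd p n q"
proof -
  obtain a b :: int where ab: "\<not> int p dvd b" "q = of_int a * of_nat p ^ m / of_int b"
    using assms(1) unfolding ppow_dvd_def by blast
  then have "q = of_int (a * int p ^ (m - n)) * of_nat p ^ n / of_int b"
    using assms(2) by (simp add: power_add[symmetric])
  with ab(1) show ?thesis
    unfolding ppow_dvd_def by blast
qed

lemma ppow_dvd_add:
  assumes "prime p" "ppow_dvd p m q1" "ppow_dvd p m q2"
  shows "ppow_dvd p m (q1 + q2)"
proof -
  obtain a1 b1 :: int where 1: "\<not> int p dvd b1" "q1 = of_int a1 * of_nat p ^ m / of_int b1"
    using assms(2) unfolding ppow_dvd_def by blast
  obtain a2 b2 :: int where 2: "\<not> int p dvd b2" "q2 = of_int a2 * of_nat p ^ m / of_int b2"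
    using assms(3) unfolding ppow_dvd_def by blast
  have "\<not> int p dvd b1 * b2"
    using 1 2 assms(1) by (simp add: prime_dvd_mult_iff)
  moreover have "q1 + q2 = of_int (a1 * b2 + a2 * b1) * of_nat p ^ m / of_int (b1 * b2)"
    using 1 2 by (cases "b1 = 0"; cases "b2 = 0") (auto simp: field_simps)
  ultimately show ?thesis
    unfolding ppow_dvd_def by blast
qed

lemma ppow_dvd_mult:
  assumes "prime p" "ppow_dvd p m q1" "ppow_dvd p n q2"
  shows "ppow_dvd p (m + n) (q1 * q2)"
proof -
  obtain a1 b1 :: int where 1: "\<not> int p dvd b1" "q1 = of_int a1 * of_nat p ^ m / of_int b1"
    using assms(2) unfolding ppow_dvd_def by blast
  obtain a2 b2 :: int where 2: "\<not> int p dvd b2" "q2 = of_int a2 * of_nat p ^ n / of_int b2"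
    using assms(3) unfolding ppow_dvd_def by blast
  have "\<not> int p dvd b1 * b2"
    using 1 2 assms(1) by (simp add: prime_dvd_mult_iff)
  moreover have "q1 * q2 = of_int (a1 * a2) * of_nat p ^ (m + n) / of_int (b1 * b2)"
    using 1 2 by (simp add: field_simps power_add)
  ultimately show ?thesis
    unfolding ppow_dvd_def by blast
qed

lemma ppow_dvd_sum:
  assumes "prime p" "\<And>i. i \<in> S \<Longrightarrow> ppow_dvd p m (f i)"
  shows "ppow_dvd p m (sum f S)"
  using assms(2)
  by (induction S rule: infinite_finite_induct) (auto simp: ppow_dvd_0 ppow_dvd_add assms(1))

lemma ppow_dvd_prod:
  assumes "prime p" "\<And>i. i \<in> S \<Longrightarrow> ppow_dvd p m (f i)"
  shows "ppow_dvd p (m * card S) (prod f S)"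
  using assms(2)
proof (induction S rule: infinite_finite_induct)
  case (insert x F)
  then have "ppow_dvd p (m + m * card F) (f x * prod f F)"
    using ppow_dvd_mult[OF assms(1)] by simp
  with insert show ?case
    by simp
qed (simp_all add: ppow_dvd_1 assms(1))

lemma ppow_dvd_half:
  assumes "prime p" "odd p" "ppow_dvd p m (2 * q)"
  shows "ppow_dvd p m q"
proof -
  obtain a b :: int where ab: "\<not> int p dvd b" "2 * q = of_int a * of_nat p ^ m / of_int b"
    using assms(3) unfolding ppow_dvd_def by blast
  have "p > 2"
    using assms(1,2) prime_ge_2_nat[of p] by (cases "p = 2") auto
  then have "\<not> int p dvd 2"
    using zdvd_imp_le[of "int p" 2] by linarith
  then have "\<not> int p dvd 2 * b"
    using ab(1) assms(1) by (simp add: prime_dvd_mult_iff)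
  moreover have "q = of_int a * of_nat p ^ m / of_int (2 * b)"
    using ab by (cases "b = 0") (auto simp: field_simps)
  ultimately show ?thesis
    unfolding ppow_dvd_def by blast
qed

lemma ppow_dvd_esym:
  assumes "prime p" "\<And>k. k \<in> X \<Longrightarrow> ppow_dvd p m (y k)"
  shows "ppow_dvd p (m * d) (esym X y d)"
  unfolding esym_def
proof (rule ppow_dvd_sum[OF assms(1)])
  fix T assume "T \<in> {T. T \<subseteq> X \<and> card T = d}"
  then show "ppow_dvd p (m * d) (prod y T)"
    using ppow_dvd_prod[OF assms(1), of T m y] assms(2) by auto
qed

lemma ppower_decompose_if_not_dvd:
  fixes p k r :: nat
  assumes "prime p" "0 < k" "\<not> p ^ (r - 1) dvd k"
  obtains v m where "k = p ^ v * m" "\<not> p dvd m" "v + 2 \<le> r"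
proof -
  define v where "v = multiplicity p k"
  have "k \<noteq> 0" "\<not> is_unit p"
    using assms(1,2) by auto
  then obtain m where m: "k = p ^ v * m" "\<not> p dvd m"
    using multiplicity_decompose' unfolding v_def by blast
  have "v + 2 \<le> r"
  proof (rule ccontr)
    assume "\<not> v + 2 \<le> r"
    then have "p ^ (r - 1) dvd p ^ v"
      by (intro le_imp_power_dvd) auto
    with assms(3) m(1) show False
      by auto
  qed
  with m that show thesis
    by blast
qed

lemma of_nat_ppower_div_cancel:
  assumes "v \<le> r" "0 < p"
  shows "(of_nat p ^ r / of_nat (p ^ v * m) :: rat) = of_nat p ^ (r - v) / of_nat m"
proof -
  have "(of_nat p ^ r :: rat) = of_nat p ^ v * of_nat p ^ (r - v)"
    using assms(1) by (simp flip: power_add)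
  with assms(2) show ?thesis
    by simp
qed

lemma ppow_dvd_complementary_pair:
  assumes "prime p" "\<not> p dvd m" "m < p ^ t"
  shows "ppow_dvd p (2 * t) (of_nat p ^ t / of_nat m + of_nat p ^ t / of_nat (p ^ t - m))"
proof -
  define a :: rat where "a = of_nat p ^ t"
  have "m \<noteq> 0"
    by (rule ccontr) (use assms(2) in simp)
  have "t \<noteq> 0"
    using assms(2,3) by (cases t) auto
  then have "int p dvd int (p ^ t)"
    by simp
  then have "\<not> int p dvd int (p ^ t) - int m"
    using assms(2) dvd_diff[of "int p" "int (p ^ t)" "int (p ^ t) - int m"] by auto
  with assms(1,2) have unit: "\<not> int p dvd int m * (int (p ^ t) - int m)"
    by (simp add: prime_dvd_mult_iff)
  have diff: "of_nat (p ^ t - m) = a - of_nat m"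
    unfolding a_def using assms(3) by (simp add: of_nat_diff)
  have "a - of_nat m \<noteq> 0"
    unfolding diff[symmetric] using assms(3) by simp
  with \<open>m \<noteq> 0\<close> have "a / of_nat m + a / of_nat (p ^ t - m) = a ^ 2 / (of_nat m * (a - of_nat m))"
    unfolding diff by (simp add: field_simps power2_eq_square)
  also have "\<dots> = of_nat p ^ (2 * t) / of_int (int m * (int (p ^ t) - int m))"
    unfolding a_def by (simp add: power_mult mult.commute)
  finally show ?thesis
    using ppow_dvd_frac[OF unit, of "2 * t"] unfolding a_def by simp
qed

lemma ppow_dvd_2_ppower_div:
  assumes "prime p" "0 < k" "\<not> p ^ (r - 1) dvd k"
  shows "ppow_dvd p 2 (of_nat p ^ r / of_nat k)"
proof -
  obtain v m where vm: "k = p ^ v * m" "\<not> p dvd m" "v + 2 \<le> r"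
    using ppower_decompose_if_not_dvd[OF assms] by blast
  have "of_nat p ^ r / of_nat k = (of_nat p ^ (r - v) / of_nat m :: rat)"
    unfolding vm(1) using vm(3) prime_gt_0_nat[OF assms(1)]
    by (intro of_nat_ppower_div_cancel) auto
  then have "ppow_dvd p (r - v) (of_nat p ^ r / of_nat k)"
    using ppow_dvd_frac[of p "int m" "r - v"] vm(2) by simp
  then show ?thesis
    by (rule ppow_dvd_mono) (use vm(3) in simp)
qed

lemma ppow_dvd_4_complementary_terms:
  assumes "prime p" "0 < k" "k < p ^ r" "\<not> p ^ (r - 1) dvd k"
  shows "ppow_dvd p 4 (of_nat p ^ r / of_nat k + of_nat p ^ r / of_nat (p ^ r - k))"
proof -
  obtain v m where vm: "k = p ^ v * m" "\<not> p dvd m" "v + 2 \<le> r"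
    using ppower_decompose_if_not_dvd[OF assms(1,2,4)] by blast
  define t where "t = r - v"
  have "p > 0" "v \<le> r"
    using prime_gt_0_nat[OF assms(1)] vm(3) by simp_all
  have pr: "p ^ r = p ^ v * p ^ t"
    unfolding t_def using \<open>v \<le> r\<close> by (simp flip: power_add)
  with assms(3) vm(1) have "m < p ^ t"
    by simp
  have "p ^ r - k = p ^ v * (p ^ t - m)"
    using pr vm(1) by (simp add: diff_mult_distrib2)
  then have "of_nat p ^ r / of_nat k + of_nat p ^ r / of_nat (p ^ r - k)
             = (of_nat p ^ t / of_nat m + of_nat p ^ t / of_nat (p ^ t - m) :: rat)"
    unfolding vm(1) t_def using \<open>v \<le> r\<close> \<open>p > 0\<close> by (simp only: of_nat_ppower_div_cancel)
  moreover have "ppow_dvd p (2 * t) (of_nat p ^ t / of_nat m + of_nat p ^ t / of_nat (p ^ t - m))"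
    using ppow_dvd_complementary_pair[OF assms(1) vm(2) \<open>m < p ^ t\<close>] .
  ultimately show ?thesis
    using ppow_dvd_mono[of p "2 * t" _ 4] vm(3) by (simp add: t_def)
qed

lemma ppow_dvd_4_sum_nonmultiples:
  fixes p r :: nat
  assumes p: "prime p" "odd p"
  defines "B \<equiv> {k\<in>{1..p ^ r - 1}. \<not> p ^ (r - 1) dvd k}"
  shows "ppow_dvd p 4 (\<Sum>k\<in>B. of_nat p ^ r / of_nat k)"
proof -
  define N where "N = p ^ r"
  define x where "x k = (of_nat p ^ r / of_nat k :: rat)" for k
  have "p > 0"
    using prime_gt_0_nat[OF p(1)] .
  have B: "0 < k" "k < N" "\<not> p ^ (r - 1) dvd k" if "k \<in> B" for k
    using that \<open>p > 0\<close> unfolding B_def N_def by auto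
  have complement_in_B: "N - k \<in> B" if "k \<in> B" for k
  proof -
    have "\<not> p ^ (r - 1) dvd N - k"
    proof
      assume "p ^ (r - 1) dvd N - k"
      moreover have "p ^ (r - 1) dvd N"
        unfolding N_def by (simp add: le_imp_power_dvd)
      ultimately have "p ^ (r - 1) dvd N - (N - k)"
        by (rule dvd_diff_nat[rotated])
      with B[OF that] show False
        by simp
    qed
    with B[OF that] show ?thesis
      unfolding B_def N_def by auto
  qed
  have "sum x B = (\<Sum>k\<in>B. x (N - k))"
    by (rule sum.reindex_bij_witness[of _ "\<lambda>k. N - k" "\<lambda>k. N - k"])
      (auto simp: complement_in_B dest: B)
  then have "2 * sum x B = (\<Sum>k\<in>B. x k + x (N - k))"
    by (simp add: sum.distrib)
  moreover have "ppow_dvd p 4 (\<Sum>k\<in>B. x k + x (N - k))"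
  proof (rule ppow_dvd_sum[OF p(1)])
    fix k assume "k \<in> B"
    show "ppow_dvd p 4 (x k + x (N - k))"
      unfolding x_def N_def using p(1) B[OF \<open>k \<in> B\<close>, unfolded N_def]
      by (rule ppow_dvd_4_complementary_terms)
  qed
  ultimately show ?thesis
    using ppow_dvd_half[OF p] unfolding x_def by metis
qed

lemma ppow_dvd_4_esym_nonmultiples:
  assumes p: "prime p" "odd p" and "1 \<le> j"
  shows "ppow_dvd p 4 (esym {k\<in>{1..p ^ r - 1}. \<not> p ^ (r - 1) dvd k} (\<lambda>k. of_nat p ^ r / of_nat k) j)"
proof (cases "j = 1")
  case True
  show ?thesis
    unfolding True esym_1 by (rule ppow_dvd_4_sum_nonmultiples[OF p])
next
  case False
  have "ppow_dvd p (2 * j) (esym {k\<in>{1..p ^ r - 1}. \<not> p ^ (r - 1) dvd k} (\<lambda>k. of_nat p ^ r / of_nat k) j)"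
    by (rule ppow_dvd_esym[OF p(1) ppow_dvd_2_ppower_div[OF p(1)]]) auto
  then show ?thesis
    by (rule ppow_dvd_mono) (use assms(3) False in simp)
qed

lemma ppow_dvd_0_esym_units:
  assumes "prime p"
  shows "ppow_dvd p 0 (esym {1..p - 1} (\<lambda>m. of_nat p / of_nat m) j)"
proof -
  have "ppow_dvd p 1 (of_nat p / of_nat m)" if "m \<in> {1..p - 1}" for m
  proof -
    from that have "0 < m" "m < p"
      by auto
    then have "\<not> int p dvd int m"
      by (auto dest: dvd_imp_le)
    then show ?thesis
      using ppow_dvd_frac[of p "int m" 1] by simp
  qed
  then have "ppow_dvd p (1 * j) (esym {1..p - 1} (\<lambda>m. of_nat p / of_nat m) j)"
    by (rule ppow_dvd_esym[OF assms])
  then show ?thesis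
    by (rule ppow_dvd_mono) simp
qed

lemma multiples_in_range_eq_image:
  fixes q p :: nat
  assumes "0 < q"
  shows "{k\<in>{1..q * p - 1}. q dvd k} = (\<lambda>m. q * m) ` {1..p - 1}"
proof (intro set_eqI iffI)
  fix k assume "k \<in> {k\<in>{1..q * p - 1}. q dvd k}"
  then have k: "q dvd k" "1 \<le> k" "k < q * p"
    by auto
  then obtain m where "k = q * m"
    by (auto elim: dvdE)
  with k have "1 \<le> m" "m < p"
    by (auto intro: Suc_leI)
  with \<open>k = q * m\<close> show "k \<in> (\<lambda>m. q * m) ` {1..p - 1}"
    by auto
next
  fix k assume "k \<in> (\<lambda>m. q * m) ` {1..p - 1}"
  then obtain m where k: "k = q * m" and "m \<in> {1..p - 1}"
    by blast
  then have m: "1 \<le> m" "m < p"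
    by auto
  with assms have "1 \<le> q * m" "q * m < q * p"
    by simp_all
  then have "q * m \<le> q * p - 1"
    by linarith
  with \<open>1 \<le> q * m\<close> k show "k \<in> {k\<in>{1..q * p - 1}. q dvd k}"
    by auto
qed

lemma esym_multiples_eq_esym_units:
  assumes "0 < p" "0 < r"
  shows "esym {k\<in>{1..p ^ r - 1}. p ^ (r - 1) dvd k} (\<lambda>k. of_nat p ^ r / of_nat k) j
         = esym {1..p - 1} (\<lambda>m. of_nat p / of_nat m :: rat) j"
proof -
  have pr: "p ^ r = p ^ (r - 1) * p"
    using assms(2) by (simp flip: power_Suc2)
  have "(\<lambda>k. of_nat p ^ r / of_nat k) \<circ> (\<lambda>m. p ^ (r - 1) * m) = (\<lambda>m. of_nat p / (of_nat m :: rat))"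
    using of_nat_ppower_div_cancel[of "r - 1" r p] assms by (simp add: fun_eq_iff)
  moreover have "inj_on (\<lambda>m. p ^ (r - 1) * m) {1..p - 1}"
    using assms(1) by (simp add: inj_on_def)
  ultimately show ?thesis
    unfolding pr multiples_in_range_eq_image[OF zero_less_power[OF assms(1)]]
    by (simp add: esym_reindex)
qed

lemma esym_ppower_congruence:
  assumes p: "prime p" "odd p" and "0 < r"
  shows "ppow_dvd p 4 (esym {1..p ^ r - 1} (\<lambda>k. of_nat p ^ r / of_nat k) d
                        - esym {1..p - 1} (\<lambda>m. of_nat p / of_nat m) d)"
proof -
  define x where "x k = (of_nat p ^ r / of_nat k :: rat)" for k
  define y where "y m = (of_nat p / of_nat m :: rat)" for m
  define A where "A = {k\<in>{1..p ^ r - 1}. p ^ (r - 1) dvd k}"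
  define B where "B = {k\<in>{1..p ^ r - 1}. \<not> p ^ (r - 1) dvd k}"
  have split: "{1..p ^ r - 1} = A \<union> B" "A \<inter> B = {}" "finite A" "finite B"
    unfolding A_def B_def by auto
  have esym_A: "esym A x j = esym {1..p - 1} y j" for j
    unfolding A_def x_def y_def using prime_gt_0_nat[OF p(1)] \<open>0 < r\<close>
    by (rule esym_multiples_eq_esym_units)
  have "esym {1..p ^ r - 1} x d = (\<Sum>j<d. esym A x j * esym B x (d - j)) + esym A x d"
    unfolding split(1) esym_union[OF split(3,4,2)] lessThan_Suc_atMost[symmetric] sum.lessThan_Suc
    by (simp add: esym_0[OF split(4)])
  then have "esym {1..p ^ r - 1} x d - esym {1..p - 1} y d
             = (\<Sum>j<d. esym {1..p - 1} y j * esym B x (d - j))"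
    by (simp add: esym_A)
  also have "ppow_dvd p 4 \<dots>"
  proof (rule ppow_dvd_sum[OF p(1)])
    fix j assume "j \<in> {..<d}"
    then have "1 \<le> d - j"
      by simp
    have "ppow_dvd p 0 (esym {1..p - 1} y j)"
      unfolding y_def by (rule ppow_dvd_0_esym_units[OF p(1)])
    moreover have "ppow_dvd p 4 (esym B x (d - j))"
      unfolding B_def x_def using p \<open>1 \<le> d - j\<close> by (rule ppow_dvd_4_esym_nonmultiples)
    ultimately have "ppow_dvd p (0 + 4) (esym {1..p - 1} y j * esym B x (d - j))"
      by (rule ppow_dvd_mult[OF p(1)])
    then show "ppow_dvd p 4 (esym {1..p - 1} y j * esym B x (d - j))"
      by simp
  qed
  finally show ?thesis
    unfolding x_def y_def .
qed

theorem lemma3p1: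
  fixes p r :: nat
  assumes "prime p" and "odd p" and "r > 0"
  shows "rat_cong (of_nat p ^ r * mhs (p ^ r - 1) [1]) (of_nat p * mhs (p - 1) [1]) p 4
       \<and> rat_cong (of_nat p ^ (2 * r) * mhs (p ^ r - 1) [1, 1]) (of_nat p ^ 2 * mhs (p - 1) [1, 1]) p 4
       \<and> rat_cong (of_nat p ^ (3 * r) * mhs (p ^ r - 1) [1, 1, 1]) (of_nat p ^ 3 * mhs (p - 1) [1, 1, 1]) p 4"
proof -
  have "rat_cong ((of_nat p ^ r) ^ d * mhs (p ^ r - 1) (replicate d 1))
                  (of_nat p ^ d * mhs (p - 1) (replicate d 1)) p 4" for d
    unfolding mhs_replicate_1_eq_esym
    by (rule rat_cong_if_ppow_dvd_diff[OF assms(1) esym_ppower_congruence[OF assms]])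
  from this[of 1] this[of 2] this[of 3] show ?thesis
    by (simp add: numeral_2_eq_2 numeral_3_eq_3 power_add power_mult)
qed

end
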